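(* We have $$ \sum_{n=0}^\infty\widetilde W(2n)\left(\frac t{(4+t)(1+4t)}\right)^n =\frac{(4+t)(1+4t)}{4(1+4t+t^2)} \,{}_2F_1\left(\tfrac12,\tfrac12;1;\frac{t(4+t)}{1+4t+t^2}\right) \cdot{}_2F_1\left(\tfrac12,\tfrac12;1;\frac{t^2}{1+4t+t^2}\right) $$ and, more generally, $$ \frac b{(b+t)(1+bt)}\sum_{n=0}^\infty\left(\frac t{(b+t)(1+bt)}\right)^n\sum_{k=0}^n{n\choose k}^2{2k\choose k}^2\left(\frac b4\right)^{2k} ={}_2F_1\left(\tfrac12,\tfrac12;1;-t(b+t)\right) \cdot\frac1{(1+bt)^{1/2}}\,{}_2F_1\left(\tfrac12,\tfrac12;1;-\frac{t^2}{1+bt}\right) $$ $$ =\frac1{1+bt+t^2}\,{}_2F_1\left(\tfrac12,\tfrac12;1;\frac{t(b+t)}{1+bt+t^2}\right) \cdot{}_2F_1\left(\tfrac12,\tfrac12;1;\frac{t^2}{1+bt+t^2}\right). $$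
   Context: Here ${}_2F_1(a_1,a_2;b_2;z)=\sum_{n\ge0}\frac{(a_1)_n(a_2)_n}{(b_2)_n}\frac{z^n}{n!}$ is the Gauss hypergeometric series with Pochhammer symbol $(a)_n=\Gamma(a+n)/\Gamma(a)$. The quantity $\widetilde W(s)=\iiint_{[0,1]^3}|1+e^{2\pi i\theta_1}+e^{2\pi i\theta_2}+e^{2\pi i\theta_3}+e^{2\pi i(\theta_2+\theta_3)}|^s\,d\theta_1\,d\theta_2\,d\theta_3$ is the zeta Mahler measure of $1+x_1+x_2+x_3+x_2x_3$ (the $s$-th moment of a 5-step planar walk whose last step direction is determined by the previous two), and its even moments are $\widetilde W(2n)=\operatorname{CT}\bigl((1+x_1+x_2+x_3+x_2x_3)(1+x_1^{-1}+x_2^{-1}+x_3^{-1}+(x_2x_3)^{-1})\bigr)^n=\sum_{k=0}^n{n\choose k}^2{2k\choose k}^2$. The identities are as formal power series in $t$ (equivalently for $t$ near $0$), with $b$ a parameter. *)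

theory Defs
  imports "HOL-Computational_Algebra.Formal_Power_Series"
begin

definition hyp2F1 :: "real \<Rightarrow> real \<Rightarrow> real \<Rightarrow> real fps" where
  "hyp2F1 a1 a2 b2 = Abs_fps (\<lambda>n. pochhammer a1 n * pochhammer a2 n / (pochhammer b2 n * fact n))"

definition Wt_even :: "nat \<Rightarrow> real" where
  "Wt_even n = (\<Sum>k\<le>n. real ((n choose k)^2 * ((2*k) choose k)^2))"

definition Wt_b :: "real \<Rightarrow> nat \<Rightarrow> real" where
  "Wt_b b n = (\<Sum>k\<le>n. real ((n choose k)^2 * ((2*k) choose k)^2) * (b/4)^(2*k))"

end

theory Submission
  imports Defs
begin

unbundle fps_syntax

text \<open>Write F for 2F1(1/2,1/2;1;z), f_N for its coefficients and Q = 1 + bt + t^2.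
  Pfaff's transformation F(-a) = (1+a)^(-1/2) F(a/(1+a)), applied to a = t(b+t) and
  a = t^2/(1+bt), gives the last equality, because 1 + t(b+t) = Q and 1 + t^2/(1+bt) = Q/(1+bt).
  For the first, expand the product as
    F(-a) F(-c) = \<Sum>_N f_N \<Sum>_(m\<le>N) C(N,m)^2 a^m c^(N-m) ((1+a)(1+c))^(-N-1/2);
  coefficientwise this is a product of two Chu-Vandermonde sums. For a = t(b+t), c = t^2/(1+bt),
  multiplied by (1+bt)^(-1/2), the N,m-term becomes Q^(-1) times (s(b+s))^m s^(2(N-m)) at s = t/Q.
  What remains is an identity between \<Sum>_N f_N \<Sum>_m C(N,m)^2 (s(b+s))^m s^(2(N-m)) and
  b/(b+s) W_b(s/(b+s)), which coefficientwise reduces to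
    \<Sum>_n C(n,N)^2 (-1)^(k-n) C(k,n) = C(k,N) C(N,k-N) = \<Sum>_m C(N,m)^2 C(m,k+m-2N).
  The case b = 4 is the first formula.\<close>

lemma fps_mult_nth_cong:
  fixes A :: "'a::comm_ring_1 fps"
  assumes "\<And>j. j \<le> n \<Longrightarrow> A $ j = A' $ j" "\<And>j. j \<le> n \<Longrightarrow> B $ j = B' $ j"
  shows "(A * B) $ n = (A' * B') $ n"
  unfolding fps_mult_nth using assms by (intro sum.cong) auto

lemma fps_compose_nth_cong:
  fixes A :: "'a::comm_ring_1 fps"
  assumes "\<And>j. j \<le> n \<Longrightarrow> A $ j = A' $ j"
  shows "(A oo w) $ n = (A' oo w) $ n"
  unfolding fps_compose_nth using assms by (intro sum.cong) auto

lemma fps_mult_nth_eq_0_below_orders: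
  fixes A :: "'a::comm_ring_1 fps"
  assumes "\<And>i. i < p \<Longrightarrow> A $ i = 0" "\<And>j. j < q \<Longrightarrow> B $ j = 0" "n < p + q"
  shows "(A * B) $ n = 0"
  unfolding fps_mult_nth
proof (rule sum.neutral, intro ballI)
  fix x assume x: "x \<in> {0..n}"
  show "A $ x * B $ (n - x) = 0"
  proof (cases "x < p")
    case False
    then have "n - x < q" using assms(3) x by auto
    then show ?thesis using assms(2) by simp
  qed (use assms(1) in simp)
qed

lemma fps_power_mult_power_nth_below:
  fixes a c :: "'a::comm_ring_1 fps"
  assumes "a $ 0 = 0" "c $ 0 = 0" "i < m + n"
  shows "(a ^ m * c ^ n) $ i = 0"
  by (rule fps_mult_nth_eq_0_below_orders[of m _ n])
     (use assms startsby_zero_power_prefix in auto)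

lemma fps_compose_nth_as_polynomial:
  fixes A :: "'a::comm_ring_1 fps"
  assumes "r $ 0 = 0" "j \<le> n"
  shows "(A oo r) $ j = (\<Sum>k\<le>n. fps_const (A $ k) * r ^ k) $ j"
proof -
  have "(A oo r) $ j = (\<Sum>k\<in>{0..j}. A $ k * (r ^ k) $ j)" by (simp add: fps_compose_nth)
  also have "\<dots> = (\<Sum>k\<le>n. A $ k * (r ^ k) $ j)"
    by (rule sum.mono_neutral_left) (use assms startsby_zero_power_prefix[OF assms(1)] in auto)
  finally show ?thesis by (simp add: fps_sum_nth)
qed

lemma fps_mult_const_right_nth:
  fixes G :: "'a::comm_ring_1 fps"
  shows "(G * (fps_const c * H)) $ n = c * (G * H) $ n"
  by (metis fps_mult_left_const_nth mult.left_commute)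

lemma fps_mult_compose_nth:
  fixes A :: "'a::comm_ring_1 fps"
  assumes "r $ 0 = 0"
  shows "(G * (A oo r)) $ n = (\<Sum>k\<le>n. A $ k * (G * r ^ k) $ n)"
proof -
  have "(G * (A oo r)) $ n = (G * (\<Sum>k\<le>n. fps_const (A $ k) * r ^ k)) $ n"
    by (rule fps_mult_nth_cong) (use fps_compose_nth_as_polynomial[OF assms] in auto)
  then show ?thesis by (simp add: sum_distrib_left fps_sum_nth fps_mult_const_right_nth)
qed

lemma fps_mult_compose_compose_nth:
  fixes U :: "'a::comm_ring_1 fps"
  assumes "a $ 0 = 0" "c $ 0 = 0"
  shows "((U oo a) * (V oo c)) $ n = (\<Sum>p\<le>n. \<Sum>q\<le>n. U $ p * V $ q * (a ^ p * c ^ q) $ n)"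
proof -
  have "((U oo a) * (V oo c)) $ n
      = ((\<Sum>p\<le>n. fps_const (U $ p) * a ^ p) * (\<Sum>q\<le>n. fps_const (V $ q) * c ^ q)) $ n"
    by (rule fps_mult_nth_cong)
       (use fps_compose_nth_as_polynomial[OF assms(1)] fps_compose_nth_as_polynomial[OF assms(2)] in auto)
  also have "(\<Sum>p\<le>n. fps_const (U $ p) * a ^ p) * (\<Sum>q\<le>n. fps_const (V $ q) * c ^ q)
       = (\<Sum>p\<le>n. \<Sum>q\<le>n. fps_const (U $ p * V $ q) * (a ^ p * c ^ q))"
    unfolding sum_product by (intro sum.cong refl) (simp add: mult_ac)
  finally show ?thesis by (simp add: fps_sum_nth fps_mult_left_const_nth)
qed

text \<open>Coefficient k only collects the terms with N \<le> k; when T N m has order at least N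
  (order_ge_first_index T), this is the formal sum of c N m * T N m over all m \<le> N.\<close>

definition triangle_sum :: "(nat \<Rightarrow> nat \<Rightarrow> 'a) \<Rightarrow> (nat \<Rightarrow> nat \<Rightarrow> 'a::comm_ring_1 fps) \<Rightarrow> 'a fps" where
  "triangle_sum c T = Abs_fps (\<lambda>k. \<Sum>N\<le>k. \<Sum>m\<le>N. c N m * T N m $ k)"

definition order_ge_first_index :: "(nat \<Rightarrow> nat \<Rightarrow> 'a::zero fps) \<Rightarrow> bool" where
  "order_ge_first_index T \<longleftrightarrow> (\<forall>N m j. m \<le> N \<longrightarrow> j < N \<longrightarrow> T N m $ j = 0)"

lemma triangle_sum_nth_truncate:
  assumes "order_ge_first_index T" "j \<le> n"
  shows "triangle_sum c T $ j = (\<Sum>N\<le>n. \<Sum>m\<le>N. fps_const (c N m) * T N m) $ j"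
proof -
  have "triangle_sum c T $ j = (\<Sum>N\<le>j. \<Sum>m\<le>N. c N m * T N m $ j)" by (simp add: triangle_sum_def)
  also have "\<dots> = (\<Sum>N\<le>n. \<Sum>m\<le>N. c N m * T N m $ j)"
    by (rule sum.mono_neutral_left) (use assms in \<open>auto simp: order_ge_first_index_def\<close>)
  finally show ?thesis by (simp add: fps_sum_nth)
qed

lemma triangle_sum_mult:
  assumes "order_ge_first_index T"
  shows "G * triangle_sum c T = triangle_sum c (\<lambda>N m. G * T N m)"
proof (rule fps_ext)
  fix n
  have "(G * triangle_sum c T) $ n = (G * (\<Sum>N\<le>n. \<Sum>m\<le>N. fps_const (c N m) * T N m)) $ n"
    by (rule fps_mult_nth_cong) (use triangle_sum_nth_truncate[OF assms] in auto)
  then show "(G * triangle_sum c T) $ n = triangle_sum c (\<lambda>N m. G * T N m) $ n"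
    by (simp add: triangle_sum_def sum_distrib_left fps_sum_nth fps_mult_const_right_nth)
qed

lemma triangle_sum_compose:
  fixes T :: "nat \<Rightarrow> nat \<Rightarrow> 'a::idom fps"
  assumes "order_ge_first_index T" "w $ 0 = 0"
  shows "triangle_sum c T oo w = triangle_sum c (\<lambda>N m. T N m oo w)"
proof (rule fps_ext)
  fix n
  have "(triangle_sum c T oo w) $ n = ((\<Sum>N\<le>n. \<Sum>m\<le>N. fps_const (c N m) * T N m) oo w) $ n"
    by (rule fps_compose_nth_cong) (use triangle_sum_nth_truncate[OF assms(1)] in auto)
  then show "(triangle_sum c T oo w) $ n = triangle_sum c (\<lambda>N m. T N m oo w) $ n"
    by (simp add: triangle_sum_def fps_compose_sum_distrib fps_compose_mult_distrib[OF assms(2)]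
        fps_sum_nth)
qed

lemma triangle_sum_cong:
  assumes "\<And>N m. m \<le> N \<Longrightarrow> T N m = T' N m"
  shows "triangle_sum c T = triangle_sum c T'"
  unfolding triangle_sum_def using assms by (intro arg_cong[where f=Abs_fps] ext sum.cong) auto

lemma order_ge_first_index_compose:
  assumes "order_ge_first_index T" "w $ 0 = 0"
  shows "order_ge_first_index (\<lambda>N m. T N m oo w)"
  using assms unfolding order_ge_first_index_def fps_compose_nth by (auto intro!: sum.neutral)

lemma order_ge_first_index_mult:
  fixes T :: "nat \<Rightarrow> nat \<Rightarrow> 'a::comm_ring_1 fps"
  assumes "order_ge_first_index T"
  shows "order_ge_first_index (\<lambda>N m. T N m * G N m)"
  unfolding order_ge_first_index_def
proof (intro allI impI)
  fix N m j :: nat assume "m \<le> N" "j < N"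
  then show "(T N m * G N m) $ j = 0"
    using assms unfolding order_ge_first_index_def
    by (intro fps_mult_nth_eq_0_below_orders[where p=N and q=0]) auto
qed

lemma order_ge_first_index_powers:
  fixes a c :: "'a::comm_ring_1 fps"
  assumes "a $ 0 = 0" "c $ 0 = 0"
  shows "order_ge_first_index (\<lambda>N m. a ^ m * c ^ (N - m))"
  unfolding order_ge_first_index_def using fps_power_mult_power_nth_below[OF assms] by auto

lemma minus_one_power_diff:
  assumes "m \<le> p" shows "(-1::real) ^ (p - m) = (-1) ^ p * (-1) ^ m"
proof -
  obtain d where p: "p = m + d" using assms le_Suc_ex by blast
  have "(-1::real) ^ m * (-1) ^ m = 1" by (simp flip: power_add add: mult_2[symmetric] power_mult)
  then show ?thesis unfolding p by (simp add: power_add)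
qed

lemma pochhammer_chu_vandermonde:
  fixes a :: real
  shows "(\<Sum>m\<le>p. (-1) ^ m * real (p choose m) * pochhammer a m / fact m) = pochhammer (1 - a) p / fact p"
proof -
  have "((-a) gchoose k) * (of_nat p gchoose (p - k)) = (-1) ^ k * real (p choose k) * pochhammer a k / fact k"
    if "k \<le> p" for k
  proof -
    have "(of_nat p gchoose (p - k) :: real) = real (p choose (p - k))" by (simp add: binomial_gbinomial)
    also have "\<dots> = real (p choose k)" using that by (simp add: binomial_symmetric[symmetric])
    finally
    show ?thesis by (simp add: gbinomial_pochhammer)
  qed
  then have "(\<Sum>m\<le>p. (-1) ^ m * real (p choose m) * pochhammer a m / fact m)
      = (\<Sum>k=0..p. ((-a) gchoose k) * (of_nat p gchoose (p - k)))"
    by (simp add: atMost_atLeast0)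
  also have "\<dots> = ((-a) + of_nat p) gchoose p" by (rule gbinomial_Vandermonde)
  finally show ?thesis by (simp add: gbinomial_pochhammer')
qed

lemma pochhammer_half_swap_le:
  assumes "p \<le> q"
  shows "pochhammer (1/2 - real q) p * pochhammer (1/2 - real p) q = pochhammer (1/2::real) p * pochhammer (1/2) q"
proof -
  obtain d where q: "q = p + d" using assms le_Suc_ex by blast
  have e1: "pochhammer (1/2 - real q) p = (-1) ^ p * pochhammer (real d + 1/2) p"
    using pochhammer_minus[of "real q - 1/2" p] unfolding q by (simp add: algebra_simps)
  have e2: "pochhammer (1/2 - real p) p = (-1) ^ p * pochhammer (1/2) p"
    using pochhammer_minus[of "real p - 1/2" p] by (simp add: algebra_simps)
  have e3: "pochhammer (1/2 - real p) q = pochhammer (1/2 - real p) p * pochhammer (1/2) d"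
    unfolding q pochhammer_product' by simp
  have e4: "pochhammer (1/2::real) q = pochhammer (1/2) d * pochhammer (1/2 + real d) p"
    unfolding q by (simp add: pochhammer_product' add.commute[of p d])
  have "((-1::real) ^ p) ^ 2 = 1" by (simp add: power_mult[symmetric] mult.commute)
  then show ?thesis unfolding e1 e3 e2 e4 by (simp add: algebra_simps power2_eq_square)
qed

lemma pochhammer_half_swap:
  "pochhammer (1/2 - real q) p * pochhammer (1/2 - real p) q = pochhammer (1/2::real) p * pochhammer (1/2) q"
  by (cases "p \<le> q") (use pochhammer_half_swap_le[of p q] pochhammer_half_swap_le[of q p] in \<open>auto simp: mult.commute\<close>)

lemma alternating_sum_choose_shifted:
  "(\<Sum>j\<le>K. (-1) ^ (K - j) * real (K choose j) * real ((N + j) choose N)) = real (N choose K)"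
proof -
  have summand: "((- real (N+1)) gchoose j) * (real K gchoose (K - j)) = (-1) ^ j * real ((N+j) choose N) * real (K choose j)"
    if "j \<le> K" for j
  proof -
    have "((- real (N+1)) gchoose j) = (-1) ^ j * (real (N+j) gchoose j)"
      using gbinomial_negated_upper[of "- real (N+1)" j] by (simp add: add.commute)
    also have "real (N+j) gchoose j = real ((N+j) choose N)"
      by (metis binomial_gbinomial binomial_symmetric add_diff_cancel_right' le_add2)
    finally show ?thesis
      using that by (simp add: binomial_gbinomial[symmetric] binomial_symmetric[symmetric])
  qed
  have rhs: "((- real (N+1)) + real K) gchoose K = (-1) ^ K * real (N choose K)"
    using gbinomial_negated_upper[of "(- real (N+1)) + real K" K] by (simp add: binomial_gbinomial)
  have "(\<Sum>j\<le>K. (-1) ^ j * real ((N+j) choose N) * real (K choose j)) = (-1) ^ K * real (N choose K)"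
    using gbinomial_Vandermonde[of "- real (N+1)" "real K" K] rhs summand by (simp add: atMost_atLeast0)
  then have "(-1) ^ K * (\<Sum>j\<le>K. (-1) ^ j * real ((N+j) choose N) * real (K choose j)) = real (N choose K)"
    by (simp flip: power_add add: mult_2[symmetric] power_mult)
  then show ?thesis by (simp add: sum_distrib_left minus_one_power_diff mult_ac)
qed

lemma sum_choose_square_gbinomial:
  assumes "N \<le> k"
  shows "(\<Sum>n\<le>k. real (n choose N) ^ 2 * ((- real (n+1)) gchoose (k - n))) = real (k choose N) * real (N choose (k - N))"
proof -
  define K where "K = k - N"
  have k: "k = N + K" using assms K_def by simp
  have g: "((- real (n+1)) gchoose (k - n)) = (-1) ^ (k - n) * real (k choose n)" if "n \<le> k" for n
  proof -
    have "((- real (n+1)) gchoose (k - n)) = (-1) ^ (k - n) * (real k gchoose (k - n))"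
      using gbinomial_negated_upper[of "- real (n+1)" "k - n"] that by (simp add: of_nat_diff)
    then show ?thesis using that by (simp add: binomial_gbinomial[symmetric] binomial_symmetric[symmetric])
  qed
  have "(\<Sum>n\<le>k. real (n choose N) ^ 2 * ((- real (n+1)) gchoose (k - n)))
      = (\<Sum>n\<in>{N..N+K}. (-1) ^ (k - n) * real (k choose n) * real (n choose N) ^ 2)"
    by (rule sum.mono_neutral_cong_right) (use g in \<open>auto simp: k\<close>)
  also have "\<dots> = (\<Sum>j\<le>K. (-1) ^ (k - (N+j)) * real (k choose (N+j)) * real ((N+j) choose N) ^ 2)"
    by (subst sum.atLeastAtMost_shift_0) (simp_all add: atMost_atLeast0)
  also have "\<dots> = (\<Sum>j\<le>K. real (k choose N) * ((-1) ^ (K - j) * real (K choose j) * real ((N+j) choose N)))"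
  proof (intro sum.cong refl)
    fix j assume j: "j \<in> {..K}"
    have "(k choose (N+j)) * ((N+j) choose N) = (k choose N) * (K choose j)"
      using choose_mult[of N "N+j" k] j k by simp
    then have "real (k choose (N+j)) * real ((N+j) choose N) = real (k choose N) * real (K choose j)"
      by (simp flip: of_nat_mult)
    moreover have "k - (N+j) = K - j" using k by simp
    ultimately show "(-1) ^ (k - (N+j)) * real (k choose (N+j)) * real ((N+j) choose N) ^ 2
        = real (k choose N) * ((-1) ^ (K - j) * real (K choose j) * real ((N+j) choose N))"
      by (simp add: power2_eq_square mult_ac)
  qed
  also have "\<dots> = real (k choose N) * real (N choose K)"
    by (simp add: sum_distrib_left[symmetric] alternating_sum_choose_shifted)
  finally show ?thesis by (simp add: K_def)
qed

text \<open>The guard reflects that X^(2N-m) has no coefficients below degree 2N-m; the truncated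
  subtraction k - (2N - m) alone would not see this.\<close>

lemma sum_choose_square_choose_nat:
  assumes "N \<le> k"
  shows "(\<Sum>m\<le>N. (N choose m) ^ 2 * (if k < 2*N - m then 0 else m choose (k - (2*N - m))))
       = (k choose N) * (N choose (k - N))"
proof (cases "k - N \<le> N")
  case False
  then show ?thesis by (intro trans[OF sum.neutral]) auto
next
  case True
  define K where "K = k - N"
  define r where "r = N - K"
  have k: "k = N + K" and N: "N = r + K" using assms True by (simp_all add: K_def r_def)
  have "(\<Sum>m\<le>N. (N choose m) ^ 2 * (if k < 2*N - m then 0 else m choose (k - (2*N - m))))
      = (\<Sum>m\<in>{r..N}. (N choose m) ^ 2 * (m choose r))"
  proof (rule sum.mono_neutral_cong_right)
    fix m assume m: "m \<in> {r..N}"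
    then have "\<not> k < 2*N - m" "k - (2*N - m) = m - r" using k N by auto
    then show "(N choose m) ^ 2 * (if k < 2*N - m then 0 else m choose (k - (2*N - m))) = (N choose m) ^ 2 * (m choose r)"
      using m by (simp add: binomial_symmetric[symmetric])
  qed (auto simp: k N)
  also have "\<dots> = (\<Sum>i\<le>K. (N choose (r+i)) ^ 2 * ((r+i) choose r))"
    by (rule sum.reindex_bij_witness[of _ "\<lambda>i. r + i" "\<lambda>m. m - r"]) (auto simp: N)
  also have "\<dots> = (\<Sum>i\<le>K. (N choose r) * ((K choose i) * (N choose (K - i))))"
  proof (rule sum.cong[OF refl])
    fix i assume i: "i \<in> {..K}"
    have "(N choose (r+i)) * ((r+i) choose r) = (N choose r) * (K choose i)"
      using choose_mult[of r "r+i" N] i N by simp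
    moreover have "N choose (r+i) = N choose (K - i)"
      using i N binomial_symmetric[of "r+i" N] by auto
    ultimately show "(N choose (r+i)) ^ 2 * ((r+i) choose r) = (N choose r) * ((K choose i) * (N choose (K - i)))"
      by (simp add: power2_eq_square mult_ac)
  qed
  also have "\<dots> = (N choose r) * ((K + N) choose K)"
    by (simp add: sum_distrib_left[symmetric] vandermonde)
  also have "N choose r = N choose K" using N binomial_symmetric[of K N] by simp
  also have "(K + N) choose K = k choose N" using k binomial_symmetric[of N k] by (simp add: add.commute)
  finally show ?thesis by (simp add: K_def mult.commute)
qed

lemma sum_choose_square_choose:
  assumes "N \<le> k"
  shows "(\<Sum>m\<le>N. real (N choose m) ^ 2 * (if k < 2*N - m then 0 else real (m choose (k - (2*N - m)))))
       = real (k choose N) * real (N choose (k - N))"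
  using arg_cong[OF sum_choose_square_choose_nat[OF assms], of real]
  by (simp add: of_nat_sum if_distrib cong: if_cong)

subsection \<open>Pfaff's transformation\<close>

definition F_coeff :: "nat \<Rightarrow> real" where
  "F_coeff n = (pochhammer (1/2) n / fact n) ^ 2"

abbreviation F :: "real fps" where
  "F \<equiv> hyp2F1 (1/2) (1/2) 1"

lemma F_nth: "F $ n = F_coeff n"
  by (simp add: hyp2F1_def F_coeff_def power2_eq_square pochhammer_fact[symmetric])

lemma F_coeff_central_binomial: "F_coeff n = (real ((2*n) choose n) / 4 ^ n) ^ 2"
proof -
  have four: "(2::real) ^ (2*n) = 4 ^ n" by (simp add: power_mult)
  have "real ((2*n) choose n) = fact (2*n) / (fact n * fact n)" by (simp add: binomial_fact)
  also have "\<dots> = 4 ^ n * pochhammer (1/2) n / fact n"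
    unfolding fact_double four by (simp add: field_simps)
  finally show ?thesis by (simp add: F_coeff_def)
qed

lemma F_uminus_nth: "(F oo - fps_X) $ n = (-1) ^ n * F_coeff n"
  by (simp add: fps_compose_uminus' F_nth)

lemma F_compose_uminus:
  assumes "a $ 0 = 0"
  shows "F oo - a = (F oo - fps_X) oo a"
proof -
  have "- a = (- fps_X) oo a" using assms by (simp add: fps_compose_uminus)
  then show ?thesis using assms by (simp add: fps_compose_assoc)
qed

lemma fps_binomial_half_mult_power:
  "fps_binomial (-1/2) * (fps_X * inverse (1 + fps_X)) ^ k = fps_X ^ k * fps_binomial (- real k - 1/2 :: real)"
proof -
  have "(fps_X * inverse (1 + fps_X :: real fps)) ^ k = fps_X ^ k * fps_binomial (- real k)"
    by (simp add: power_mult_distrib fps_binomial_minus_one[symmetric] fps_binomial_power)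
  moreover have "fps_binomial (-1/2) * fps_binomial (- real k) = fps_binomial (- real k - 1/2 :: real)"
    using fps_binomial_add_mult[of "-1/2" "- real k"] by (simp add: algebra_simps)
  ultimately show ?thesis by (simp add: mult_ac)
qed

lemma pfaff_coeff:
  "(\<Sum>k\<le>n. F_coeff k * ((- real k - 1/2) gchoose (n - k))) = (-1) ^ n * F_coeff n"
proof -
  have summand: "F_coeff k * ((- real k - 1/2) gchoose (n - k)) =
      (-1) ^ n * (pochhammer (1/2) n / fact n) * ((-1) ^ k * real (n choose k) * pochhammer (1/2) k / fact k)"
    if "k \<le> n" for k
  proof -
    have g: "((- real k - 1/2) gchoose (n - k)) = (-1) ^ (n - k) * pochhammer (real k + 1/2) (n - k) / fact (n - k)"
      by (simp add: gbinomial_pochhammer algebra_simps)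
    have pp: "pochhammer (1/2::real) k * pochhammer (real k + 1/2) (n - k) = pochhammer (1/2) n"
      using pochhammer_product'[of "1/2::real" k "n - k"] that by (simp add: add.commute)
    have bf: "real (n choose k) = fact n / (fact k * fact (n - k))" using that by (simp add: binomial_fact)
    show ?thesis unfolding g F_coeff_def bf minus_one_power_diff[OF that] using pp[symmetric]
      by (simp add: field_simps power2_eq_square)
  qed
  have "(\<Sum>k\<le>n. F_coeff k * ((- real k - 1/2) gchoose (n - k))) =
      (-1) ^ n * (pochhammer (1/2) n / fact n) * (\<Sum>k\<le>n. (-1) ^ k * real (n choose k) * pochhammer (1/2) k / fact k)"
    by (simp add: summand sum_distrib_left)
  then show ?thesis unfolding pochhammer_chu_vandermonde by (simp add: F_coeff_def power2_eq_square)
qed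

lemma pfaff_X: "F oo - fps_X = fps_binomial (-1/2) * (F oo (fps_X * inverse (1 + fps_X)))"
proof (rule fps_ext)
  fix n
  have "(fps_binomial (-1/2) * (F oo (fps_X * inverse (1 + fps_X)))) $ n
     = (\<Sum>k\<le>n. F $ k * (fps_binomial (-1/2) * (fps_X * inverse (1 + fps_X)) ^ k) $ n)"
    by (rule fps_mult_compose_nth) simp
  also have "\<dots> = (\<Sum>k\<le>n. F_coeff k * ((- real k - 1/2) gchoose (n - k)))"
    by (intro sum.cong refl)
       (simp only: F_nth fps_binomial_half_mult_power fps_X_power_mult_nth fps_binomial_nth, simp)
  finally show "(F oo - fps_X) $ n = (fps_binomial (-1/2) * (F oo (fps_X * inverse (1 + fps_X)))) $ n"
    by (simp add: pfaff_coeff F_uminus_nth)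
qed

lemma pfaff:
  assumes "a $ 0 = 0"
  shows "F oo - a = (fps_binomial (-1/2) oo a) * (F oo (a * inverse (1 + a)))"
proof -
  have "F oo - a = (fps_binomial (-1/2) * (F oo (fps_X * inverse (1 + fps_X)))) oo a"
    using F_compose_uminus[OF assms] pfaff_X by simp
  also have "\<dots> = (fps_binomial (-1/2) oo a) * ((F oo (fps_X * inverse (1 + fps_X))) oo a)"
    by (rule fps_compose_mult_distrib) (rule assms)
  also have "(F oo (fps_X * inverse (1 + fps_X))) oo a = F oo (a * inverse (1 + a))"
    using assms by (simp add: fps_compose_assoc[symmetric] fps_compose_mult_distrib
        fps_inverse_compose fps_compose_add_distrib)
  finally show ?thesis .
qed

subsection \<open>A product formula for \<open>F(-a) F(-c)\<close>\<close>

definition product_coeff :: "nat \<Rightarrow> nat \<Rightarrow> real" where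
  "product_coeff N m = F_coeff N * real (N choose m) ^ 2"

definition product_factor :: "nat \<Rightarrow> nat \<Rightarrow> nat \<Rightarrow> real" where
  "product_factor p q m = (-1) ^ (p - m) * pochhammer (1/2) (q + m) / (fact m ^ 2 * fact (p - m))"

lemma product_factor_sum:
  "(\<Sum>m\<le>p. product_factor p q m) = (-1) ^ p * pochhammer (1/2) q * pochhammer (1/2 - real q) p / fact p ^ 2"
proof -
  have summand: "product_factor p q m = (-1) ^ p * pochhammer (1/2) q / fact p
      * ((-1) ^ m * real (p choose m) * pochhammer (real q + 1/2) m / fact m)"
    if "m \<le> p" for m
  proof -
    have pp: "pochhammer (1/2::real) (q + m) = pochhammer (1/2) q * pochhammer (real q + 1/2) m"
      using pochhammer_product'[of "1/2::real" q m] by (simp add: algebra_simps)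
    have bf: "real (p choose m) = fact p / (fact m * fact (p - m))" using that by (simp add: binomial_fact)
    show ?thesis unfolding product_factor_def pp bf minus_one_power_diff[OF that]
      by (simp add: field_simps power2_eq_square)
  qed
  have "(\<Sum>m\<le>p. product_factor p q m) = (-1) ^ p * pochhammer (1/2) q / fact p
      * (\<Sum>m\<le>p. (-1) ^ m * real (p choose m) * pochhammer (real q + 1/2) m / fact m)"
    by (simp add: summand sum_distrib_left)
  then show ?thesis unfolding pochhammer_chu_vandermonde by (simp add: power2_eq_square algebra_simps)
qed

lemma product_summand_split:
  assumes "m \<le> p" "i \<le> q"
  shows "product_coeff (m+i) m * ((- real (m+i) - 1/2) gchoose (p - m)) * ((- real (m+i) - 1/2) gchoose (q - i))
       = product_factor p q m * product_factor q p i"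
proof -
  have g: "((- real (m+i) - 1/2) gchoose r) = (-1) ^ r * pochhammer (real (m+i) + 1/2) r / fact r" for r
    by (simp add: gbinomial_pochhammer algebra_simps)
  have p1: "pochhammer (1/2::real) (m+i) * pochhammer (real (m+i) + 1/2) (p - m) = pochhammer (1/2) (p+i)"
    using pochhammer_product'[of "1/2::real" "m+i" "p - m"] assms by (simp add: add.commute)
  have p2: "pochhammer (1/2::real) (m+i) * pochhammer (real (m+i) + 1/2) (q - i) = pochhammer (1/2) (q+m)"
    using pochhammer_product'[of "1/2::real" "m+i" "q - i"] assms by (simp add: add.commute)
  have bf: "real ((m+i) choose m) = fact (m+i) / (fact m * fact i)" by (simp add: binomial_fact)
  have "product_coeff (m+i) m = pochhammer (1/2) (m+i) ^ 2 / (fact m * fact i) ^ 2"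
    unfolding product_coeff_def F_coeff_def bf by (simp add: field_simps power2_eq_square)
  then have "product_coeff (m+i) m * ((- real (m+i) - 1/2) gchoose (p - m)) * ((- real (m+i) - 1/2) gchoose (q - i)) =
     (-1) ^ (p - m) * (-1) ^ (q - i) * (pochhammer (1/2) (m+i) * pochhammer (real (m+i) + 1/2) (p - m))
      * (pochhammer (1/2) (m+i) * pochhammer (real (m+i) + 1/2) (q - i)) / ((fact m * fact i) ^ 2 * fact (p - m) * fact (q - i))"
    unfolding g by (simp add: field_simps power2_eq_square)
  also have "\<dots> = product_factor p q m * product_factor q p i"
    unfolding p1 p2 product_factor_def by (simp add: field_simps power2_eq_square)
  finally show ?thesis .
qed

lemma product_double_sum:
  "(\<Sum>m\<le>p. \<Sum>i\<le>q. product_coeff (m+i) m * ((- real (m+i) - 1/2) gchoose (p - m))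
      * ((- real (m+i) - 1/2) gchoose (q - i))) = (-1) ^ (p+q) * F_coeff p * F_coeff q"
proof -
  have "(\<Sum>m\<le>p. \<Sum>i\<le>q. product_coeff (m+i) m * ((- real (m+i) - 1/2) gchoose (p - m))
      * ((- real (m+i) - 1/2) gchoose (q - i))) = (\<Sum>m\<le>p. product_factor p q m) * (\<Sum>i\<le>q. product_factor q p i)"
    unfolding sum_product by (intro sum.cong refl product_summand_split) auto
  also have "\<dots> = (-1) ^ (p+q) * F_coeff p * F_coeff q"
    unfolding product_factor_sum F_coeff_def using pochhammer_half_swap[of q p]
    by (simp add: field_simps power2_eq_square power_add)
  finally show ?thesis .
qed

lemma sum_triangle_eq_sum_box:
  fixes g :: "nat \<Rightarrow> nat \<Rightarrow> 'a::comm_monoid_add"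
  assumes "p + q \<le> n"
  shows "(\<Sum>N\<le>n. \<Sum>m\<le>N. if m \<le> p \<and> N - m \<le> q then g m (N - m) else 0) = (\<Sum>m\<le>p. \<Sum>i\<le>q. g m i)"
proof -
  let ?h = "\<lambda>m i. if m \<le> p \<and> i \<le> q then g m i else 0"
  have "(\<Sum>N\<le>n. \<Sum>m\<le>N. if m \<le> p \<and> N - m \<le> q then g m (N - m) else 0) = (\<Sum>(m,i)\<in>{(m,i). m + i \<le> n}. ?h m i)"
    by (simp add: sum.triangle_reindex_eq)
  also have "\<dots> = (\<Sum>(m,i)\<in>{..p} \<times> {..q}. ?h m i)"
  proof (rule sum.mono_neutral_right)
    show "finite {(m, i). m + i \<le> n}"
      by (rule finite_subset[of _ "{..n} \<times> {..n}"]) auto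
  qed (use assms in \<open>auto split: if_splits\<close>)
  also have "\<dots> = (\<Sum>m\<le>p. \<Sum>i\<le>q. g m i)"
    by (simp add: sum.cartesian_product[symmetric])
  finally show ?thesis .
qed

lemma sum_triangle_swap_box:
  fixes g :: "nat \<Rightarrow> nat \<Rightarrow> nat \<Rightarrow> nat \<Rightarrow> 'a::comm_monoid_add"
  shows "(\<Sum>N\<le>n. \<Sum>m\<le>N. \<Sum>p\<le>n. \<Sum>q\<le>n. g N m p q) = (\<Sum>p\<le>n. \<Sum>q\<le>n. \<Sum>N\<le>n. \<Sum>m\<le>N. g N m p q)"
proof -
  have inner: "(\<Sum>m\<le>N. \<Sum>p\<le>n. \<Sum>q\<le>n. g N m p q) = (\<Sum>p\<le>n. \<Sum>q\<le>n. \<Sum>m\<le>N. g N m p q)" for N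
    by (subst sum.swap) (rule sum.cong[OF refl], rule sum.swap)
  have "(\<Sum>N\<le>n. \<Sum>m\<le>N. \<Sum>p\<le>n. \<Sum>q\<le>n. g N m p q) = (\<Sum>p\<le>n. \<Sum>N\<le>n. \<Sum>q\<le>n. \<Sum>m\<le>N. g N m p q)"
    unfolding inner by (rule sum.swap)
  also have "\<dots> = (\<Sum>p\<le>n. \<Sum>q\<le>n. \<Sum>N\<le>n. \<Sum>m\<le>N. g N m p q)"
    by (rule sum.cong[OF refl], rule sum.swap)
  finally show ?thesis .
qed

lemma product_coeff_triangle_sum_nth:
  assumes "p + q \<le> n"
  shows "(\<Sum>N\<le>n. \<Sum>m\<le>N. product_coeff N m * ((fps_X ^ m * fps_binomial (- real N - 1/2)) $ p
            * (fps_X ^ (N - m) * fps_binomial (- real N - 1/2)) $ q))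
       = (F oo - fps_X) $ p * (F oo - fps_X) $ q"
proof -
  define g where "g m i = product_coeff (m+i) m * ((- real (m+i) - 1/2) gchoose (p - m))
      * ((- real (m+i) - 1/2) gchoose (q - i))" for m i
  have "(\<Sum>N\<le>n. \<Sum>m\<le>N. product_coeff N m * ((fps_X ^ m * fps_binomial (- real N - 1/2)) $ p
            * (fps_X ^ (N - m) * fps_binomial (- real N - 1/2)) $ q))
      = (\<Sum>N\<le>n. \<Sum>m\<le>N. if m \<le> p \<and> N - m \<le> q then g m (N - m) else 0)"
    by (intro sum.cong refl) (auto simp: fps_X_power_mult_nth g_def)
  also have "\<dots> = (\<Sum>m\<le>p. \<Sum>i\<le>q. g m i)" by (rule sum_triangle_eq_sum_box[OF assms])
  finally show ?thesis unfolding g_def product_double_sum by (simp add: F_uminus_nth power_add)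
qed

lemma F_uminus_mult_F_uminus:
  assumes a0: "a $ 0 = 0" and c0: "c $ 0 = 0"
  shows "(F oo - a) * (F oo - c) = triangle_sum product_coeff (\<lambda>N m. a ^ m * c ^ (N - m)
           * (fps_binomial (- real N - 1/2) oo a) * (fps_binomial (- real N - 1/2) oo c))"
    (is "_ = triangle_sum _ ?T")
proof (rule fps_ext)
  fix n
  let ?B = "\<lambda>N. fps_binomial (- real N - 1/2) :: real fps"
  let ?P = "\<lambda>p q. (a ^ p * c ^ q) $ n"
  have T: "?T N m = ((fps_X ^ m * ?B N) oo a) * ((fps_X ^ (N - m) * ?B N) oo c)" for N m
    using a0 c0 by (simp add: fps_compose_mult_distrib fps_compose_power[symmetric] mult_ac)
  have "triangle_sum product_coeff ?T $ n
      = (\<Sum>N\<le>n. \<Sum>m\<le>N. \<Sum>p\<le>n. \<Sum>q\<le>n. product_coeff N m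
           * ((fps_X ^ m * ?B N) $ p * (fps_X ^ (N - m) * ?B N) $ q) * ?P p q)"
    unfolding triangle_sum_def fps_nth_Abs_fps T fps_mult_compose_compose_nth[OF a0 c0]
    by (simp add: sum_distrib_left mult_ac)
  also have "\<dots> = (\<Sum>p\<le>n. \<Sum>q\<le>n. \<Sum>N\<le>n. \<Sum>m\<le>N. product_coeff N m
           * ((fps_X ^ m * ?B N) $ p * (fps_X ^ (N - m) * ?B N) $ q) * ?P p q)"
    by (rule sum_triangle_swap_box)
  also have "\<dots> = (\<Sum>p\<le>n. \<Sum>q\<le>n. (F oo - fps_X) $ p * (F oo - fps_X) $ q * ?P p q)"
  proof (intro sum.cong refl)
    fix p q
    show "(\<Sum>N\<le>n. \<Sum>m\<le>N. product_coeff N m * ((fps_X ^ m * ?B N) $ p * (fps_X ^ (N - m) * ?B N) $ q) * ?P p q)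
        = (F oo - fps_X) $ p * (F oo - fps_X) $ q * ?P p q"
    proof (cases "p + q \<le> n")
      case True
      then show ?thesis
        by (simp add: product_coeff_triangle_sum_nth sum_distrib_right[symmetric] del: sum_distrib_right)
    next
      case False
      then have "?P p q = 0" using fps_power_mult_power_nth_below[OF a0 c0] by simp
      then show ?thesis by simp
    qed
  qed
  also have "\<dots> = ((F oo - a) * (F oo - c)) $ n"
    unfolding F_compose_uminus[OF a0] F_compose_uminus[OF c0]
    by (rule fps_mult_compose_compose_nth[OF a0 c0, symmetric])
  finally show "((F oo - a) * (F oo - c)) $ n = triangle_sum product_coeff ?T $ n" ..
qed

lemma Wt_b_eq: "Wt_b b n = (\<Sum>N\<le>n. real (n choose N) ^ 2 * (F_coeff N * b ^ (2*N)))"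
  unfolding Wt_b_def F_coeff_central_binomial
  by (intro sum.cong refl) (simp add: power_divide power_mult_distrib power_mult mult_ac)

lemma inverse_const_plus_X:
  fixes b :: real
  assumes "b \<noteq> 0"
  shows "inverse (fps_const b + fps_X) = fps_const (1/b) * (fps_binomial (-1) oo (fps_const (1/b) * fps_X))"
proof -
  have "fps_binomial (-1) oo (fps_const (1/b) * fps_X) = inverse (1 + fps_const (1/b) * fps_X)"
    by (simp add: fps_binomial_minus_one fps_inverse_compose fps_compose_add_distrib)
  moreover have "fps_const b * fps_const (1/b) = (1::real fps)"
    unfolding fps_const_mult[symmetric] using assms by simp
  then have "fps_const b + fps_X = fps_const b * (1 + fps_const (1/b) * fps_X)"
    by (simp add: distrib_left mult.assoc[symmetric])
  ultimately show ?thesis by (simp add: fps_inverse_mult fps_const_inverse divide_inverse)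
qed

lemma inverse_const_plus_X_power_nth:
  fixes b :: real
  assumes "b \<noteq> 0"
  shows "(inverse (fps_const b + fps_X) ^ r) $ j = ((- real r) gchoose j) / b ^ (r + j)"
proof -
  have "inverse (fps_const b + fps_X) ^ r
      = fps_const ((1/b) ^ r) * (fps_binomial (- real r) oo (fps_const (1/b) * fps_X))"
    unfolding inverse_const_plus_X[OF assms] power_mult_distrib
    by (simp add: fps_compose_power fps_const_power fps_binomial_power)
  moreover have "(fps_binomial (- real r) oo (fps_const (1/b) * fps_X)) $ j = (1/b) ^ j * ((- real r) gchoose j)"
    by (simp only: fps_compose_linear fps_nth_Abs_fps fps_binomial_nth)
  ultimately show ?thesis by (simp add: power_add field_simps)
qed

lemma const_plus_X_power_nth: "((fps_const (b::real) + fps_X) ^ m) $ j = real (m choose j) * b ^ (m - j)"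
proof -
  have "(fps_X + fps_const b) ^ m = (\<Sum>i\<le>m. of_nat (m choose i) * fps_X ^ i * fps_const b ^ (m - i))"
    by (rule binomial_ring)
  then have "((fps_const b + fps_X) ^ m) $ j = (\<Sum>k\<le>m. real (m choose k) * ((if j = k then 1 else 0) * b ^ (m - k)))"
    by (simp add: add.commute fps_sum_nth fps_const_power mult.assoc fps_X_power_mult_nth
        fps_of_nat[symmetric] del: fps_of_nat)
  also have "\<dots> = (\<Sum>k\<le>m. if j = k then real (m choose k) * b ^ (m - k) else 0)"
    by (intro sum.cong) auto
  finally show ?thesis by (cases "j \<le> m") (simp_all add: sum.delta')
qed

definition phi_series :: "real \<Rightarrow> real fps" where
  "phi_series b = triangle_sum product_coeff (\<lambda>N m. (fps_X * (fps_const b + fps_X)) ^ m * (fps_X ^ 2) ^ (N - m))"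

lemma Wt_b_transform_nth:
  fixes b :: real
  assumes b: "b \<noteq> 0"
  shows "(fps_const b * inverse (fps_const b + fps_X) * (Abs_fps (Wt_b b) oo (fps_X * inverse (fps_const b + fps_X)))) $ k
     = (\<Sum>n\<le>k. Wt_b b n * ((- real (n+1)) gchoose (k - n))) / b ^ k"
proof -
  let ?I = "inverse (fps_const b + fps_X)"
  have "(fps_const b * ?I * (Abs_fps (Wt_b b) oo (fps_X * ?I))) $ k
      = (\<Sum>n\<le>k. Wt_b b n * (fps_const b * ?I * (fps_X * ?I) ^ n) $ k)"
    by (simp add: fps_mult_compose_nth)
  also have "\<dots> = (\<Sum>n\<le>k. Wt_b b n * (((- real (n+1)) gchoose (k - n)) / b ^ k))"
  proof (intro sum.cong refl)
    fix n assume n: "n \<in> {..k}"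
    have e: "fps_const b * ?I * (fps_X * ?I) ^ n = fps_X ^ n * (fps_const b * ?I ^ (n+1))"
      by (simp add: power_mult_distrib mult_ac)
    have "(fps_const b * ?I * (fps_X * ?I) ^ n) $ k = b * ((- real (n+1)) gchoose (k - n)) / b ^ (n + 1 + (k - n))"
      unfolding e fps_X_power_mult_nth fps_mult_left_const_nth inverse_const_plus_X_power_nth[OF b]
      using n by simp
    moreover have "n + 1 + (k - n) = Suc k" using n by simp
    ultimately show "Wt_b b n * (fps_const b * ?I * (fps_X * ?I) ^ n) $ k = Wt_b b n * (((- real (n+1)) gchoose (k - n)) / b ^ k)"
      using b by simp
  qed
  finally show ?thesis by (simp add: sum_divide_distrib)
qed

lemma Wt_b_transform_nth_closed:
  fixes b :: real
  assumes b: "b \<noteq> 0"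
  shows "(fps_const b * inverse (fps_const b + fps_X) * (Abs_fps (Wt_b b) oo (fps_X * inverse (fps_const b + fps_X)))) $ k * b ^ k
     = (\<Sum>N\<le>k. F_coeff N * b ^ (2*N) * (real (k choose N) * real (N choose (k - N))))"
proof -
  have "(\<Sum>n\<le>k. Wt_b b n * ((- real (n+1)) gchoose (k - n)))
      = (\<Sum>n\<le>k. \<Sum>N\<le>k. F_coeff N * b ^ (2*N) * (real (n choose N) ^ 2 * ((- real (n+1)) gchoose (k - n))))"
  proof (intro sum.cong refl)
    fix n assume n: "n \<in> {..k}"
    have "Wt_b b n = (\<Sum>N\<le>k. real (n choose N) ^ 2 * (F_coeff N * b ^ (2*N)))"
      unfolding Wt_b_eq by (rule sum.mono_neutral_left) (use n in auto)
    then show "Wt_b b n * ((- real (n+1)) gchoose (k - n))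
        = (\<Sum>N\<le>k. F_coeff N * b ^ (2*N) * (real (n choose N) ^ 2 * ((- real (n+1)) gchoose (k - n))))"
      by (simp add: sum_distrib_left sum_distrib_right mult_ac)
  qed
  also have "\<dots> = (\<Sum>N\<le>k. F_coeff N * b ^ (2*N) * (\<Sum>n\<le>k. real (n choose N) ^ 2 * ((- real (n+1)) gchoose (k - n))))"
    by (subst sum.swap) (simp add: sum_distrib_left)
  also have "\<dots> = (\<Sum>N\<le>k. F_coeff N * b ^ (2*N) * (real (k choose N) * real (N choose (k - N))))"
    by (intro sum.cong refl) (subst sum_choose_square_gbinomial, auto)
  finally show ?thesis using b by (simp add: Wt_b_transform_nth)
qed

lemma phi_series_nth:
  "phi_series b $ k = (\<Sum>N\<le>k. \<Sum>m\<le>N. product_coeff N m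
      * (if k < 2*N - m then 0 else real (m choose (k - (2*N - m))) * b ^ (m - (k - (2*N - m)))))"
  unfolding phi_series_def triangle_sum_def fps_nth_Abs_fps
proof (intro sum.cong refl)
  fix N m :: nat assume "m \<in> {..N}"
  then have "2*N - m = m + 2 * (N - m)" by simp
  then have pow: "(fps_X * (fps_const b + fps_X)) ^ m * (fps_X ^ 2) ^ (N - m) = fps_X ^ (2*N - m) * (fps_const b + fps_X) ^ m"
    by (simp add: power_mult_distrib power_mult[symmetric] power_add mult_ac)
  show "product_coeff N m * ((fps_X * (fps_const b + fps_X)) ^ m * (fps_X ^ 2) ^ (N - m)) $ k
      = product_coeff N m * (if k < 2*N - m then 0 else real (m choose (k - (2*N - m))) * b ^ (m - (k - (2*N - m))))"
    unfolding pow fps_X_power_mult_nth const_plus_X_power_nth by simp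
qed

lemma phi_series_nth_closed:
  "phi_series b $ k * b ^ k = (\<Sum>N\<le>k. F_coeff N * b ^ (2*N) * (real (k choose N) * real (N choose (k - N))))"
proof -
  have "product_coeff N m * (if k < 2*N - m then 0 else real (m choose (k - (2*N - m))) * b ^ (m - (k - (2*N - m)))) * b ^ k
      = F_coeff N * b ^ (2*N) * (real (N choose m) ^ 2 * (if k < 2*N - m then 0 else real (m choose (k - (2*N - m)))))"
    if "m \<le> N" for N m
  proof (cases "k < 2*N - m \<or> m < k - (2*N - m)")
    case False
    then have "m - (k - (2*N - m)) + k = 2*N" using that by linarith
    then have "b ^ (m - (k - (2*N - m))) * b ^ k = b ^ (2*N)" by (metis power_add)
    then show ?thesis using False by (simp add: product_coeff_def mult_ac)
  qed auto
  then have "phi_series b $ k * b ^ k = (\<Sum>N\<le>k. F_coeff N * b ^ (2*N)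
      * (\<Sum>m\<le>N. real (N choose m) ^ 2 * (if k < 2*N - m then 0 else real (m choose (k - (2*N - m))))))"
    unfolding phi_series_nth sum_distrib_right sum_distrib_left by (intro sum.cong refl) auto
  then show ?thesis by (simp add: sum_choose_square_choose)
qed

lemma Wt_b_transform_eq_phi_series:
  fixes b :: real
  assumes "b \<noteq> 0"
  shows "fps_const b * inverse (fps_const b + fps_X) * (Abs_fps (Wt_b b) oo (fps_X * inverse (fps_const b + fps_X)))
       = phi_series b"
proof (rule fps_ext)
  fix k
  show "(fps_const b * inverse (fps_const b + fps_X) * (Abs_fps (Wt_b b) oo (fps_X * inverse (fps_const b + fps_X)))) $ k
      = phi_series b $ k"
    using Wt_b_transform_nth_closed[OF assms, of k] phi_series_nth_closed[of b k] assms
    by (metis mult_cancel_right power_not_zero)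
qed

lemma fps_binomial_half_compose_square:
  fixes g :: "real fps"
  assumes "g $ 0 = 0"
  shows "(fps_binomial (-1/2) oo g) ^ 2 = inverse (1 + g)"
proof -
  have "(fps_binomial (-1/2) oo g) ^ 2 = fps_binomial (-1/2) ^ 2 oo g"
    using assms by (simp add: fps_compose_power)
  also have "fps_binomial (-1/2 :: real) ^ 2 = inverse (1 + fps_X)"
    by (simp add: fps_binomial_power fps_binomial_minus_one[symmetric])
  finally show ?thesis using assms by (simp add: fps_inverse_compose fps_compose_add_distrib)
qed

lemma fps_binomial_shifted_half_compose:
  fixes g :: "real fps"
  assumes "g $ 0 = 0"
  shows "fps_binomial (- real N - 1/2) oo g = (fps_binomial (-1/2) oo g) * inverse (1 + g) ^ N"
proof -
  have "fps_binomial (-1/2) * inverse (1 + fps_X) ^ N = fps_binomial (-1/2 + of_nat N * (-1::real))"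
    by (simp only: fps_binomial_minus_one[symmetric] fps_binomial_power fps_binomial_add_mult)
  then have "fps_binomial (- real N - 1/2) = fps_binomial (-1/2) * inverse (1 + fps_X) ^ N"
    by (simp add: algebra_simps)
  then have "fps_binomial (- real N - 1/2) oo g = (fps_binomial (-1/2) oo g) * (inverse (1 + fps_X) oo g) ^ N"
    using assms by (simp add: fps_compose_mult_distrib fps_compose_power)
  then show ?thesis using assms by (simp add: fps_inverse_compose fps_compose_add_distrib)
qed

lemma fps_square_eq_imp_eq:
  fixes P R :: "'a::{idom,ring_char_0} fps"
  assumes "P ^ 2 = R ^ 2" "P $ 0 = 1" "R $ 0 = 1"
  shows "P = R"
proof -
  have "(P - R) * (P + R) = 0" using assms(1) by (simp add: algebra_simps power2_eq_square)
  moreover have "P + R \<noteq> 0"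
  proof
    assume "P + R = 0"
    then have "(P + R) $ 0 = 0" by simp
    then show False using assms by simp
  qed
  ultimately show ?thesis by simp
qed

subsection \<open>The substitution \<open>t \<mapsto> t/(1 + b t + t\<^sup>2)\<close>\<close>

locale quadratic_substitution =
  fixes b :: real
begin

abbreviation Q :: "real fps" where "Q \<equiv> 1 + fps_const b * fps_X + fps_X ^ 2"
abbreviation E :: "real fps" where "E \<equiv> 1 + fps_const b * fps_X"
abbreviation D :: "real fps" where "D \<equiv> (fps_const b + fps_X) * E"
abbreviation \<alpha> :: "real fps" where "\<alpha> \<equiv> fps_X * (fps_const b + fps_X)"
abbreviation \<beta> :: "real fps" where "\<beta> \<equiv> fps_X ^ 2 * inverse E"
abbreviation \<omega> :: "real fps" where "\<omega> \<equiv> fps_X * inverse Q"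

lemma alpha_nth_0: "\<alpha> $ 0 = 0" by simp
lemma beta_nth_0: "\<beta> $ 0 = 0" by simp
lemma omega_nth_0: "\<omega> $ 0 = 0" by simp

lemma Q_mult_inverse: "Q * inverse Q = 1" by (rule inverse_mult_eq_1') simp
lemma E_mult_inverse: "E * inverse E = 1" by (rule inverse_mult_eq_1') simp

lemma one_plus_alpha: "1 + \<alpha> = Q" by (simp add: algebra_simps power2_eq_square)

lemma inverse_one_plus_beta: "inverse (1 + \<beta>) = inverse Q * E"
proof -
  have "1 + \<beta> = E * inverse E + fps_X ^ 2 * inverse E" using E_mult_inverse by simp
  also have "\<dots> = Q * inverse E" by (simp add: algebra_simps)
  finally show ?thesis by (simp add: fps_inverse_mult)
qed

lemma beta_over_one_plus_beta: "\<beta> * inverse (1 + \<beta>) = fps_X ^ 2 * inverse Q"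
  unfolding inverse_one_plus_beta using E_mult_inverse by (simp add: mult_ac)

lemma fps_binomial_half_product:
  "(fps_binomial (-1/2) oo \<alpha>) * (fps_binomial (-1/2) oo (fps_const b * fps_X)) * (fps_binomial (-1/2) oo \<beta>) = inverse Q"
proof (rule fps_square_eq_imp_eq)
  have "((fps_binomial (-1/2) oo \<alpha>) * (fps_binomial (-1/2) oo (fps_const b * fps_X)) * (fps_binomial (-1/2) oo \<beta>)) ^ 2
      = inverse (1 + \<alpha>) * inverse E * inverse (1 + \<beta>)"
    using fps_binomial_half_compose_square[of \<alpha>] fps_binomial_half_compose_square[of \<beta>]
      fps_binomial_half_compose_square[of "fps_const b * fps_X"]
    by (simp only: power_mult_distrib fps_mult_nth_0 fps_X_nth) simp
  also have "\<dots> = (inverse Q) ^ 2"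
    unfolding one_plus_alpha inverse_one_plus_beta using E_mult_inverse by (simp add: mult_ac power2_eq_square)
  finally show "((fps_binomial (-1/2) oo \<alpha>) * (fps_binomial (-1/2) oo (fps_const b * fps_X)) * (fps_binomial (-1/2) oo \<beta>)) ^ 2
      = (inverse Q) ^ 2" .
qed simp_all

lemma F_pfaff_product:
  "(F oo - \<alpha>) * (fps_binomial (-1/2) oo (fps_const b * fps_X)) * (F oo - \<beta>)
   = inverse Q * (F oo (\<alpha> * inverse Q)) * (F oo (fps_X ^ 2 * inverse Q))"
proof -
  have "(F oo - \<alpha>) * (fps_binomial (-1/2) oo (fps_const b * fps_X)) * (F oo - \<beta>)
      = ((fps_binomial (-1/2) oo \<alpha>) * (fps_binomial (-1/2) oo (fps_const b * fps_X)) * (fps_binomial (-1/2) oo \<beta>))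
        * (F oo (\<alpha> * inverse (1 + \<alpha>))) * (F oo (\<beta> * inverse (1 + \<beta>)))"
    by (simp add: pfaff mult_ac)
  then show ?thesis unfolding fps_binomial_half_product beta_over_one_plus_beta one_plus_alpha .
qed

lemma const_plus_omega: "fps_const b + \<omega> = D * inverse Q"
proof -
  have "fps_const b + \<omega> = fps_const b * (Q * inverse Q) + \<omega>" using Q_mult_inverse by simp
  also have "\<dots> = (fps_const b * Q + fps_X) * inverse Q" by (simp add: algebra_simps)
  also have "fps_const b * Q + fps_X = D" by (simp add: algebra_simps power2_eq_square)
  finally show ?thesis .
qed

lemma binomial_half_mult_product_term:
  assumes "m \<le> N"
  shows "(fps_binomial (-1/2) oo (fps_const b * fps_X))
         * (\<alpha> ^ m * \<beta> ^ (N - m) * (fps_binomial (- real N - 1/2) oo \<alpha>) * (fps_binomial (- real N - 1/2) oo \<beta>))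
       = inverse Q * (((fps_X * (fps_const b + fps_X)) ^ m * (fps_X ^ 2) ^ (N - m)) oo \<omega>)"
proof -
  define n where "n = N - m"
  have N: "N = m + n" using assms n_def by simp
  have "fps_binomial (- real N - 1/2) oo \<alpha> = (fps_binomial (-1/2) oo \<alpha>) * (inverse Q) ^ N"
    unfolding fps_binomial_shifted_half_compose[OF alpha_nth_0] one_plus_alpha ..
  moreover have "fps_binomial (- real N - 1/2) oo \<beta> = (fps_binomial (-1/2) oo \<beta>) * (inverse Q * E) ^ N"
    unfolding fps_binomial_shifted_half_compose[OF beta_nth_0] inverse_one_plus_beta ..
  ultimately have "(fps_binomial (-1/2) oo (fps_const b * fps_X))
         * (\<alpha> ^ m * \<beta> ^ n * (fps_binomial (- real N - 1/2) oo \<alpha>) * (fps_binomial (- real N - 1/2) oo \<beta>))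
      = ((fps_binomial (-1/2) oo \<alpha>) * (fps_binomial (-1/2) oo (fps_const b * fps_X)) * (fps_binomial (-1/2) oo \<beta>))
        * (\<alpha> ^ m * \<beta> ^ n * (inverse Q) ^ N * (inverse Q * E) ^ N)"
    by (simp only: mult_ac)
  also have "\<dots> = inverse Q * ((\<alpha> * E * (inverse Q) ^ 2) ^ m * (\<beta> * E * (inverse Q) ^ 2) ^ n)"
    unfolding fps_binomial_half_product N by (simp add: power_mult_distrib power_add mult_ac power2_eq_square)
  also have "\<alpha> * E * (inverse Q) ^ 2 = \<omega> * (fps_const b + \<omega>)"
    unfolding const_plus_omega by (simp add: mult_ac power2_eq_square)
  also have "\<beta> * E * (inverse Q) ^ 2 = \<omega> ^ 2"
    using E_mult_inverse by (simp add: mult_ac power_mult_distrib)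
  also have "(\<omega> * (fps_const b + \<omega>)) ^ m * (\<omega> ^ 2) ^ n = ((fps_X * (fps_const b + fps_X)) ^ m * (fps_X ^ 2) ^ n) oo \<omega>"
    by (simp add: fps_compose_mult_distrib fps_compose_power[symmetric] fps_compose_add_distrib)
  finally show ?thesis unfolding n_def .
qed

lemma F_product_eq_phi_series_compose:
  "(F oo - \<alpha>) * (fps_binomial (-1/2) oo (fps_const b * fps_X)) * (F oo - \<beta>) = inverse Q * (phi_series b oo \<omega>)"
proof -
  let ?T = "\<lambda>N m. \<alpha> ^ m * \<beta> ^ (N - m) * (fps_binomial (- real N - 1/2) oo \<alpha>) * (fps_binomial (- real N - 1/2) oo \<beta>)"
  let ?P = "\<lambda>N m. (fps_X * (fps_const b + fps_X)) ^ m * (fps_X ^ 2) ^ (N - m)"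
  have T: "order_ge_first_index ?T"
    using order_ge_first_index_mult[OF order_ge_first_index_mult[OF order_ge_first_index_powers[OF alpha_nth_0 beta_nth_0]]] .
  have T0: "order_ge_first_index ?P" by (rule order_ge_first_index_powers) simp_all
  have "(F oo - \<alpha>) * (fps_binomial (-1/2) oo (fps_const b * fps_X)) * (F oo - \<beta>)
      = (fps_binomial (-1/2) oo (fps_const b * fps_X)) * ((F oo - \<alpha>) * (F oo - \<beta>))"
    by (simp only: mult_ac)
  also have "\<dots> = (fps_binomial (-1/2) oo (fps_const b * fps_X)) * triangle_sum product_coeff ?T"
    unfolding F_uminus_mult_F_uminus[OF alpha_nth_0 beta_nth_0] ..
  also have "\<dots> = triangle_sum product_coeff (\<lambda>N m. inverse Q * (?P N m oo \<omega>))"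
    unfolding triangle_sum_mult[OF T] by (intro triangle_sum_cong binomial_half_mult_product_term)
  also have "\<dots> = inverse Q * (triangle_sum product_coeff ?P oo \<omega>)"
    unfolding triangle_sum_compose[OF T0 omega_nth_0]
    by (rule triangle_sum_mult[symmetric]) (rule order_ge_first_index_compose[OF T0 omega_nth_0])
  finally show ?thesis unfolding phi_series_def .
qed

lemma phi_series_compose_omega:
  assumes b: "b \<noteq> 0"
  shows "inverse Q * (phi_series b oo \<omega>) = fps_const b * inverse D * (Abs_fps (Wt_b b) oo (fps_X * inverse D))"
proof -
  let ?W = "Abs_fps (Wt_b b)"
  have cb0: "(fps_const b + fps_X) $ 0 \<noteq> 0" using b by simp
  have "inverse (fps_const b + \<omega>) = inverse (D * inverse Q)"
    by (simp only: const_plus_omega)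
  then have inv: "inverse (fps_const b + \<omega>) = inverse D * Q"
    by (simp add: fps_inverse_mult)
  have "(fps_X * inverse (fps_const b + fps_X)) oo \<omega> = \<omega> * inverse (fps_const b + \<omega>)"
    using cb0 by (simp add: fps_compose_mult_distrib fps_inverse_compose fps_compose_add_distrib)
  also have "\<dots> = fps_X * inverse D * (Q * inverse Q)"
    unfolding inv by (simp only: mult_ac)
  finally have arg: "(fps_X * inverse (fps_const b + fps_X)) oo \<omega> = fps_X * inverse D"
    by (simp add: Q_mult_inverse)
  have "phi_series b oo \<omega> = fps_const b * (inverse (fps_const b + fps_X) oo \<omega>)
      * ((?W oo (fps_X * inverse (fps_const b + fps_X))) oo \<omega>)"
    unfolding Wt_b_transform_eq_phi_series[OF b, symmetric] by (simp add: fps_compose_mult_distrib)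
  also have "\<dots> = fps_const b * (inverse D * Q) * (?W oo (fps_X * inverse D))"
    using cb0 by (simp add: fps_compose_assoc[symmetric] arg fps_inverse_compose fps_compose_add_distrib inv)
  finally have "inverse Q * (phi_series b oo \<omega>) = (Q * inverse Q) * (fps_const b * inverse D * (?W oo (fps_X * inverse D)))"
    by (simp add: mult_ac)
  then show ?thesis by (simp add: Q_mult_inverse)
qed

lemma Wt_b_transform_eq_F_product:
  assumes "b \<noteq> 0"
  shows "fps_const b * inverse D * (Abs_fps (Wt_b b) oo (fps_X * inverse D))
       = (F oo - \<alpha>) * (fps_binomial (-1/2) oo (fps_const b * fps_X)) * (F oo - \<beta>)"
  using phi_series_compose_omega[OF assms] F_product_eq_phi_series_compose by simp

lemma Wt_b_transform_eq_hyp_product: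
  assumes "b \<noteq> 0"
  shows "fps_const b * inverse D * (Abs_fps (Wt_b b) oo (fps_X * inverse D))
       = inverse Q * (F oo (\<alpha> * inverse Q)) * (F oo (fps_X ^ 2 * inverse Q))"
  using Wt_b_transform_eq_F_product[OF assms] F_pfaff_product by simp

end

lemma fps_solve_const_inverse_mult:
  fixes D Z A B S :: "'a::field fps"
  assumes "D $ 0 \<noteq> 0" "c \<noteq> 0" "fps_const c * inverse D * Z = inverse S * A * B"
  shows "Z = D * inverse (fps_const c * S) * A * B"
proof -
  have "inverse (fps_const c) * fps_const c = (1 :: 'a fps)"
    unfolding fps_const_inverse fps_const_mult[symmetric] using assms(2) by simp
  then have "Z = (D * inverse D) * (inverse (fps_const c) * fps_const c) * Z"
    using assms(1) by (simp add: inverse_mult_eq_1')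
  also have "\<dots> = D * inverse (fps_const c) * (fps_const c * inverse D * Z)" by (simp only: mult_ac)
  finally show ?thesis unfolding assms(3) by (simp add: fps_inverse_mult mult_ac)
qed

lemma Wt_b_four: "Wt_b 4 = Wt_even"
  by (simp add: fun_eq_iff Wt_b_def Wt_even_def)

theorem theorem1:
  fixes b :: real
  assumes "b \<noteq> 0"
  shows
  "Abs_fps Wt_even oo (fps_X * inverse ((fps_const 4 + fps_X) * (1 + fps_const 4 * fps_X)))
     = (fps_const 4 + fps_X) * (1 + fps_const 4 * fps_X)
         * inverse (fps_const 4 * (1 + fps_const 4 * fps_X + fps_X^2))
       * (hyp2F1 (1/2) (1/2) 1 oo (fps_X * (fps_const 4 + fps_X) * inverse (1 + fps_const 4 * fps_X + fps_X^2)))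
       * (hyp2F1 (1/2) (1/2) 1 oo (fps_X^2 * inverse (1 + fps_const 4 * fps_X + fps_X^2)))
   \<and> fps_const b * inverse ((fps_const b + fps_X) * (1 + fps_const b * fps_X))
       * (Abs_fps (Wt_b b) oo (fps_X * inverse ((fps_const b + fps_X) * (1 + fps_const b * fps_X))))
     = (hyp2F1 (1/2) (1/2) 1 oo (- (fps_X * (fps_const b + fps_X))))
       * (fps_binomial (-1/2) oo (fps_const b * fps_X))
       * (hyp2F1 (1/2) (1/2) 1 oo (- (fps_X^2 * inverse (1 + fps_const b * fps_X))))
   \<and> (hyp2F1 (1/2) (1/2) 1 oo (- (fps_X * (fps_const b + fps_X))))
       * (fps_binomial (-1/2) oo (fps_const b * fps_X))
       * (hyp2F1 (1/2) (1/2) 1 oo (- (fps_X^2 * inverse (1 + fps_const b * fps_X))))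
     = inverse (1 + fps_const b * fps_X + fps_X^2)
       * (hyp2F1 (1/2) (1/2) 1 oo (fps_X * (fps_const b + fps_X) * inverse (1 + fps_const b * fps_X + fps_X^2)))
       * (hyp2F1 (1/2) (1/2) 1 oo (fps_X^2 * inverse (1 + fps_const b * fps_X + fps_X^2)))"
proof -
  have "(4::real) \<noteq> 0" by simp
  note four = quadratic_substitution.Wt_b_transform_eq_hyp_product[OF this, unfolded Wt_b_four]
  show ?thesis
    using fps_solve_const_inverse_mult[OF _ _ four] quadratic_substitution.F_pfaff_product
      quadratic_substitution.Wt_b_transform_eq_F_product[OF assms]
    by simp
qed

end
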